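(* Consider the networked feedback system described in the context, under the input assumption stated there, and let $d(k)=\sum_{i=0}^{\tau}\omega(k,k-i)u(k-i)$. Then: (1) $\mathbb E\{d^2(k)\}=\sum_{i=0}^{\tau}\alpha_i^2p_i(1-p_i)\mathbb E\{u^2(k-i)\}$; (2) for $1\le|k_1-k_2|\le\tau$, $\mathbb E\{d(k_1)d(k_2)\}=-\sum_{i_1,i_2=0}^{\tau}\delta(k_1-i_1-k_2+i_2)\alpha_{i_1}\alpha_{i_2}p_{i_1}p_{i_2}\mathbb E\{u^2(k_1-i_1)\}$; (3) for $|k_1-k_2|>\tau$, $\mathbb E\{d(k_1)d(k_2)\}=0$.
   Context: Setting: $P$ is a SISO discrete-time LTI plant which is strictly proper (relative degree $\ge1$), $K$ a proper SISO LTI controller. Let $\tau\ge0$ be an integer, $\mathcal D=\{0,\dots,\tau\}$, and $\{\tau_n\}$ an i.i.d. sequence with values in $\mathcal D$, $\Pr\{\tau_n=i\}=p_i$, $\sum_ip_i=1$. With real weights $\alpha_0,\dots,\alpha_\tau$ and Kronecker delta $\delta$, the channel maps $u$ to $u_d(k)=\sum_{i=0}^{\tau}\alpha_i\delta(\tau_{k-i}-i)u(k-i)$. Closed loop: plant input $v-u_d$, plant output $y$, $u=Ky$; signals real, system at rest at $k=0$ (signals vanish for $k<0$). Define $\omega(k,n)=\alpha_{k-n}[\delta(\tau_n-(k-n))-p_{k-n}]$ if $n\le k\le n+\tau$ and $\omega(k,n)=0$ otherwise. Input assumption: $\{\tau_n\}$ is independent of $\{v(k)\}$, and $\{v(k)\}$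 is zero-mean white noise (independent values) with bounded variances. *)

theory Defs
  imports "HOL-Probability.Probability"
begin

definition kdelta :: "int \<Rightarrow> real" where
  "kdelta m = (if m = 0 then 1 else 0)"

text \<open>Extension of a signal defined for times k >= 0 by zero to negative times
  (the system is at rest: signals vanish for k < 0).\<close>
definition sig_ext :: "(nat \<Rightarrow> 'a \<Rightarrow> real) \<Rightarrow> int \<Rightarrow> 'a \<Rightarrow> real" where
  "sig_ext s k x = (if k < 0 then 0 else s (nat k) x)"

definition omega ::
  "nat \<Rightarrow> (nat \<Rightarrow> real) \<Rightarrow> (nat \<Rightarrow> real) \<Rightarrow> (nat \<Rightarrow> 'a \<Rightarrow> nat) \<Rightarrow> nat \<Rightarrow> nat \<Rightarrow> 'a \<Rightarrow> real"
  where
  "omega tau \<alpha> p ts k n x =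
     (if n \<le> k \<and> k \<le> n + tau
      then \<alpha> (k - n) * (kdelta (int (ts n x) - int (k - n)) - p (k - n))
      else 0)"

text \<open>d(k) = sum_{i=0}^{tau} omega(k,k-i) u(k-i); terms with k - i < 0 vanish since u(k-i) = 0.\<close>
definition dsig ::
  "nat \<Rightarrow> (nat \<Rightarrow> real) \<Rightarrow> (nat \<Rightarrow> real) \<Rightarrow> (nat \<Rightarrow> 'a \<Rightarrow> nat) \<Rightarrow> (nat \<Rightarrow> 'a \<Rightarrow> real)
     \<Rightarrow> nat \<Rightarrow> 'a \<Rightarrow> real"
  where
  "dsig tau \<alpha> p ts u k x =
     (\<Sum>i\<le>tau. if i \<le> k then omega tau \<alpha> p ts k (k - i) x * u (k - i) x else 0)"

end

(*
  Write d(k) as the sum of the terms omega(k, n) u(n), n = k - i.  The weight omega(k, n) is a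
  function of the delay tau_n with mean zero, and tau_n is independent of the sigma-algebra of
  tau_0, ..., tau_{n-1} and the noise v, for which the causal loop makes u(0), ..., u(n)
  measurable.  Hence the product of two terms with different delay indices n < n' has mean zero
  (factor out the weight of tau_n'), while two terms with the same index n contribute
  E[omega omega'] E[u(n)^2], where E[omega_i omega_j] = alpha_i alpha_j (delta_ij p_i - p_i p_j).
  All these moments exist because |u(n)| <= C (|v(0)| + ... + |v(n-1)|): the channel only
  rescales past inputs by bounded factors.
*)
theory Submission
  imports Defs
begin

definition dominated_by :: "('a \<Rightarrow> real) \<Rightarrow> ('a \<Rightarrow> 'b::real_normed_vector) \<Rightarrow> bool" where
  "dominated_by b f \<longleftrightarrow> (\<exists>C\<ge>0. \<forall>x. norm (f x) \<le> C * b x)"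

lemma dominated_by_zero: "dominated_by b (\<lambda>x. 0)"
  unfolding dominated_by_def by (intro exI[of _ 0]) simp

lemma dominated_by_add:
  assumes "dominated_by b f" "dominated_by b g"
  shows "dominated_by b (\<lambda>x. f x + g x)"
proof -
  obtain C D where "C \<ge> 0" "\<And>x. norm (f x) \<le> C * b x" "D \<ge> 0" "\<And>x. norm (g x) \<le> D * b x"
    using assms unfolding dominated_by_def by blast
  then have "norm (f x + g x) \<le> (C + D) * b x" for x
    by (metis norm_triangle_le add_mono distrib_right)
  then show ?thesis
    unfolding dominated_by_def using \<open>C \<ge> 0\<close> \<open>D \<ge> 0\<close> by (intro exI[of _ "C + D"]) simp
qed

lemma dominated_by_bounded_linear:
  assumes L: "bounded_linear L" and f: "dominated_by b f"
  shows "dominated_by b (\<lambda>x. L (f x))"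
proof -
  obtain C where C: "C \<ge> 0" "\<And>x. norm (f x) \<le> C * b x"
    using f unfolding dominated_by_def by blast
  obtain K where K: "K > 0" "\<And>z. norm (L z) \<le> norm z * K"
    using bounded_linear.pos_bounded[OF L] by blast
  have "norm (L (f x)) \<le> (K * C) * b x" for x
  proof -
    have "norm (L (f x)) \<le> norm (f x) * K" by (rule K(2))
    also have "\<dots> \<le> (C * b x) * K" using C(2) K(1) by (intro mult_right_mono) auto
    finally show ?thesis by (simp add: ac_simps)
  qed
  then show ?thesis
    unfolding dominated_by_def using C K by (intro exI[of _ "K * C"]) simp
qed

lemma dominated_by_diff:
  assumes "dominated_by b f" "dominated_by b g"
  shows "dominated_by b (\<lambda>x. f x - g x)"
  using dominated_by_add[OF assms(1)
      dominated_by_bounded_linear[OF bounded_linear_minus[OF bounded_linear_ident] assms(2)]]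
  by simp

lemma dominated_by_mult_bounded:
  fixes f :: "'a \<Rightarrow> real"
  assumes g: "\<And>x. \<bar>g x\<bar> \<le> K" and f: "dominated_by b f"
  shows "dominated_by b (\<lambda>x. g x * f x)"
proof -
  obtain C where C: "C \<ge> 0" "\<And>x. norm (f x) \<le> C * b x"
    using f unfolding dominated_by_def by blast
  have K: "K \<ge> 0"
    using g order_trans abs_ge_zero by blast
  have "\<bar>g x * f x\<bar> \<le> (K * C) * b x" for x
    using mult_mono[OF g C(2) K norm_ge_zero] by (simp add: abs_mult ac_simps)
  then show ?thesis
    unfolding dominated_by_def using C K by (intro exI[of _ "K * C"]) simp
qed

lemma dominated_by_mono:
  assumes "\<And>x. b x \<le> b' x" "dominated_by b f"
  shows "dominated_by b' f"
proof -
  obtain C where C: "C \<ge> 0" "\<And>x. norm (f x) \<le> C * b x"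
    using assms(2) unfolding dominated_by_def by blast
  have "norm (f x) \<le> C * b' x" for x
    using C(2)[of x] mult_left_mono[OF assms(1) C(1)] by (rule order_trans)
  then show ?thesis
    unfolding dominated_by_def using C(1) by blast
qed

lemma integrable_mult_dominated:
  fixes f g :: "'a \<Rightarrow> real"
  assumes b: "integrable M (\<lambda>x. (b x)\<^sup>2)"
    and meas: "f \<in> borel_measurable M" "g \<in> borel_measurable M"
    and dom: "dominated_by b f" "dominated_by b g"
  shows "integrable M (\<lambda>x. f x * g x)"
proof -
  obtain C D where C: "C \<ge> 0" "\<And>x. norm (f x) \<le> C * b x"
    and D: "D \<ge> 0" "\<And>x. norm (g x) \<le> D * b x"
    using dom unfolding dominated_by_def by blast
  have bound: "norm (f x * g x) \<le> C * D * (b x)\<^sup>2" for x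
  proof -
    have "norm (f x * g x) \<le> (C * b x) * (D * b x)"
      unfolding norm_mult
      using mult_mono[OF C(2) D(2) order_trans[OF norm_ge_zero C(2)] norm_ge_zero] .
    then show ?thesis
      by (simp add: power2_eq_square ac_simps)
  qed
  show ?thesis
  proof (rule Bochner_Integration.integrable_bound)
    show "integrable M (\<lambda>x. C * D * (b x)\<^sup>2)"
      using b by (rule integrable_mult_right)
    show "(\<lambda>x. f x * g x) \<in> borel_measurable M"
      using meas by (rule borel_measurable_times)
    show "AE x in M. norm (f x * g x) \<le> norm (C * D * (b x)\<^sup>2)"
      using bound by (intro AE_I2) (metis abs_ge_self order_trans real_norm_def)
  qed
qed

lemma subalgebra_sigma:
  assumes "G \<subseteq> sets M"
  shows "subalgebra M (sigma (space M) G)"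
proof -
  have "G \<subseteq> Pow (space M)"
    using assms sets.sets_into_space by blast
  then show ?thesis
    unfolding subalgebra_def using assms by (simp add: sets.sigma_sets_subset)
qed

lemma (in prob_space) prob_conj_indep_var:
  assumes "indep_var S X T Y" "A \<in> sets S" "B \<in> sets T"
  shows "prob {x \<in> space M. X x \<in> A \<and> Y x \<in> B} =
    prob {x \<in> space M. X x \<in> A} * prob {x \<in> space M. Y x \<in> B}"
  using indep_varD[OF assms] by (simp add: vimage_def Int_def conj_commute)

lemma sigma_sets_vimage_subset:
  assumes "f \<in> measurable (sigma \<Omega> G) N" "G \<subseteq> Pow \<Omega>"
  shows "sigma_sets \<Omega> {f -` A \<inter> \<Omega> | A. A \<in> sets N} \<subseteq> sigma_sets \<Omega> G"
  using measurable_sets[OF assms(1)] assms(2) by (intro sigma_sets_mono) auto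

lemma (in prob_space) indep_set_mono:
  assumes "indep_set A B" "A' \<subseteq> A" "B' \<subseteq> B"
  shows "indep_set A' B'"
  unfolding indep_set_def
  by (rule indep_sets_mono_sets[OF assms(1)[unfolded indep_set_def]])
    (use assms(2,3) in \<open>auto split: bool.split\<close>)

lemma (in prob_space) integral_indicator_mult_indep:
  assumes G: "G \<subseteq> events" "Int_stable G"
    and E: "E \<in> events" and indep: "\<And>B. B \<in> G \<Longrightarrow> prob (E \<inter> B) = prob E * prob B"
    and Z: "Z \<in> borel_measurable (sigma (space M) G)" "integrable M Z"
  shows "(\<integral>x. indicator E x * Z x \<partial>M) = prob E * integral\<^sup>L M Z"
proof -
  let ?\<sigma> = "sigma_sets (space M)" and ?I = "indicator E :: 'a \<Rightarrow> real"
  have G_space: "G \<subseteq> Pow (space M)" "{E} \<subseteq> Pow (space M)"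
    using G(1) E sets.sets_into_space by blast+
  have "indep_set {E} G"
    using G(1) E indep by (simp add: indep_sets2_eq)
  then have indep_sigma: "indep_set (?\<sigma> {E}) (?\<sigma> G)"
    by (rule indep_set_sigma_sets) (use G(2) in \<open>simp_all add: Int_stable_def\<close>)
  have "?I \<in> borel_measurable (sigma (space M) {E})"
    by (rule borel_measurable_indicator) (simp add: sets_measure_of[OF G_space(2)] sigma_sets.Basic)
  then have "?\<sigma> {?I -` A \<inter> space M | A. A \<in> sets borel} \<subseteq> ?\<sigma> {E}"
    using G_space(2) by (rule sigma_sets_vimage_subset)
  moreover have "?\<sigma> {Z -` A \<inter> space M | A. A \<in> sets borel} \<subseteq> ?\<sigma> G"
    using Z(1) G_space(1) by (rule sigma_sets_vimage_subset)
  moreover have "random_variable borel ?I" "random_variable borel Z"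
    using E measurable_from_subalg[OF subalgebra_sigma[OF G(1)] Z(1)] by simp_all
  ultimately have "indep_var borel ?I borel Z"
    unfolding indep_var_eq using indep_set_mono[OF indep_sigma] by simp
  then have "(\<integral>x. indicator E x * Z x \<partial>M) = (\<integral>x. indicator E x \<partial>M) * integral\<^sup>L M Z"
    by (rule indep_var_lebesgue_integral) (use E Z(2) in \<open>auto simp: emeasure_eq_measure\<close>)
  then show ?thesis
    using E by simp
qed

lemma (in prob_space) integral_fun_mult_indep:
  fixes X :: "'a \<Rightarrow> nat"
  assumes G: "G \<subseteq> events" "Int_stable G"
    and X: "X \<in> measurable M (count_space UNIV)" "\<And>x. x \<in> space M \<Longrightarrow> X x \<le> n"
    and indep: "\<And>j B. B \<in> G \<Longrightarrow>
      prob ({x \<in> space M. X x = j} \<inter> B) = prob {x \<in> space M. X x = j} * prob B"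
    and Z: "Z \<in> borel_measurable (sigma (space M) G)" "integrable M Z"
  shows "(\<integral>x. g (X x) * Z x \<partial>M) = (\<Sum>j\<le>n. g j * prob {x \<in> space M. X x = j}) * integral\<^sup>L M Z"
proof -
  let ?E = "\<lambda>j. {x \<in> space M. X x = j}"
  have E: "?E j \<in> events" for j
    using measurable_sets[OF X(1), of "{j}"] by (simp add: vimage_def Int_def conj_commute)
  have "(\<integral>x. g (X x) * Z x \<partial>M) = (\<integral>x. (\<Sum>j\<le>n. g j * (Z x * indicator (?E j) x)) \<partial>M)"
  proof (rule Bochner_Integration.integral_cong[OF refl])
    fix x assume x: "x \<in> space M"
    have "(\<Sum>j\<le>n. g j * (Z x * indicator (?E j) x)) = (\<Sum>j\<in>{X x}. g j * (Z x * indicator (?E j) x))"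
      by (rule sum.mono_neutral_right) (use x X(2) in \<open>auto simp: indicator_def\<close>)
    then show "g (X x) * Z x = (\<Sum>j\<le>n. g j * (Z x * indicator (?E j) x))"
      using x by (simp add: indicator_def)
  qed
  also have "\<dots> = (\<Sum>j\<le>n. (\<integral>x. g j * (Z x * indicator (?E j) x) \<partial>M))"
    by (rule Bochner_Integration.integral_sum)
      (use E Z(2) in \<open>auto intro!: integrable_mult_right integrable_real_mult_indicator\<close>)
  also have "\<dots> = (\<Sum>j\<le>n. g j * (\<integral>x. Z x * indicator (?E j) x \<partial>M))"
    by simp
  also have "\<dots> = (\<Sum>j\<le>n. g j * prob (?E j)) * integral\<^sup>L M Z"
  proof -
    have "(\<integral>x. Z x * indicator (?E j) x \<partial>M) = prob (?E j) * integral\<^sup>L M Z" for j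
      using integral_indicator_mult_indep[OF G E indep Z] by (simp add: mult.commute)
    then show ?thesis
      by (simp add: sum_distrib_right mult.assoc)
  qed
  finally show ?thesis .
qed

locale random_delays_and_noise = prob_space M for M :: "'a measure" +
  fixes tau :: nat
    and p :: "nat \<Rightarrow> real"
    and ts :: "nat \<Rightarrow> 'a \<Rightarrow> nat"
    and v :: "nat \<Rightarrow> 'a \<Rightarrow> real"
  assumes ts_indep: "indep_vars (\<lambda>_. count_space UNIV) ts UNIV"
    and ts_v_indep: "indep_var
        (Pi\<^sub>M UNIV (\<lambda>_. borel)) (\<lambda>x. (\<lambda>n. real (ts n x)) :: nat \<Rightarrow> real)
        (Pi\<^sub>M UNIV (\<lambda>_. borel)) (\<lambda>x. (\<lambda>k. v k x) :: nat \<Rightarrow> real)"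
    and ts_range: "\<And>n x. x \<in> space M \<Longrightarrow> ts n x \<le> tau"
    and ts_dist: "\<And>n i. i \<le> tau \<Longrightarrow> prob {x \<in> space M. ts n x = i} = p i"
    and p_sum: "(\<Sum>i\<le>tau. p i) = 1"
    and v_int: "\<And>k. integrable M (\<lambda>x. (v k x)\<^sup>2)"
begin

abbreviation real_seqs :: "(nat \<Rightarrow> real) measure" where
  "real_seqs \<equiv> Pi\<^sub>M UNIV (\<lambda>_. borel)"

definition truncate :: "nat \<Rightarrow> (nat \<Rightarrow> real) \<Rightarrow> nat \<Rightarrow> real" where
  "truncate n t = (\<lambda>m. if m < n then t m else 0)"

text \<open>\<open>history n\<close> is the \<sigma>-algebra of \<open>\<tau>\<^sub>0, \<dots>, \<tau>\<^sub>n\<^sub>-\<^sub>1\<close> and the whole noise sequence: by causality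
  the loop signals up to time \<open>n\<close> are measurable for it, while \<open>\<tau>\<^sub>n\<close> is independent of it.\<close>
definition history_events :: "nat \<Rightarrow> 'a set set" where
  "history_events n =
    {{x \<in> space M. truncate n (\<lambda>m. real (ts m x)) \<in> B \<and> (\<lambda>k. v k x) \<in> C} | B C.
      B \<in> sets real_seqs \<and> C \<in> sets real_seqs}"

abbreviation history :: "nat \<Rightarrow> 'a measure" where
  "history n \<equiv> sigma (space M) (history_events n)"

lemma measurable_truncate: "truncate n \<in> measurable real_seqs real_seqs"
  unfolding truncate_def by (rule measurable_PiM_single') (auto intro!: measurable_If)

lemma measurable_delays: "(\<lambda>x. (\<lambda>m. real (ts m x))) \<in> measurable M real_seqs"
  and measurable_noise: "(\<lambda>x. (\<lambda>k. v k x)) \<in> measurable M real_seqs"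
  using ts_v_indep unfolding indep_var_eq by auto

lemma measurable_delay: "ts n \<in> measurable M (count_space UNIV)"
  using ts_indep unfolding indep_vars_def by auto

lemma history_events_subset_events: "history_events n \<subseteq> events"
proof
  fix X assume "X \<in> history_events n"
  then obtain B C where X: "X = {x \<in> space M. truncate n (\<lambda>m. real (ts m x)) \<in> B \<and> (\<lambda>k. v k x) \<in> C}"
    and B: "B \<in> sets real_seqs" and C: "C \<in> sets real_seqs"
    unfolding history_events_def by blast
  have "(\<lambda>x. truncate n (\<lambda>m. real (ts m x))) \<in> measurable M real_seqs"
    using measurable_comp[OF measurable_delays measurable_truncate] by (simp add: comp_def)
  then show "X \<in> events"
    unfolding X using B C measurable_noise by measurable
qed

lemma Int_stable_history_events: "Int_stable (history_events n)"
proof (rule Int_stableI)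
  fix X Y assume "X \<in> history_events n" "Y \<in> history_events n"
  then obtain B C B' C' where
    "X = {x \<in> space M. truncate n (\<lambda>m. real (ts m x)) \<in> B \<and> (\<lambda>k. v k x) \<in> C}"
    "Y = {x \<in> space M. truncate n (\<lambda>m. real (ts m x)) \<in> B' \<and> (\<lambda>k. v k x) \<in> C'}"
    "B \<in> sets real_seqs" "C \<in> sets real_seqs" "B' \<in> sets real_seqs" "C' \<in> sets real_seqs"
    unfolding history_events_def by blast
  then show "X \<inter> Y \<in> history_events n"
    unfolding history_events_def
    by (intro CollectI exI[of _ "B \<inter> B'"] exI[of _ "C \<inter> C'"]) auto
qed

lemma history_events_Pow: "history_events n \<subseteq> Pow (space M)"
  using history_events_subset_events sets.sets_into_space by blast

lemma measurable_historyI: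
  assumes "\<And>A. A \<in> sets N \<Longrightarrow> f -` A \<inter> space M \<in> history_events n"
    and "\<And>x. x \<in> space M \<Longrightarrow> f x \<in> space N"
  shows "f \<in> measurable (history n) N"
  using assms history_events_Pow
  by (intro measurableI) (auto simp: sigma_sets.Basic)

lemma measurable_delay_history:
  assumes "m < n"
  shows "ts m \<in> measurable (history n) (count_space UNIV)"
proof (rule measurable_historyI)
  fix A :: "nat set"
  have "real ` A \<in> sets borel"
    by (rule sets.countable) auto
  then have "(\<lambda>t. t m) -` (real ` A) \<inter> space real_seqs \<in> sets real_seqs"
    by (rule measurable_sets[OF measurable_component_singleton[OF UNIV_I]])
  moreover have "ts m -` A \<inter> space M = {x \<in> space M.
      truncate n (\<lambda>m. real (ts m x)) \<in> (\<lambda>t. t m) -` (real ` A) \<inter> space real_seqs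
      \<and> (\<lambda>k. v k x) \<in> space real_seqs}"
    using assms by (auto simp: truncate_def space_PiM)
  ultimately show "ts m -` A \<inter> space M \<in> history_events n"
    unfolding history_events_def by blast
qed simp

lemma measurable_delay_fun_history: "m < n \<Longrightarrow> (\<lambda>x. g (ts m x)) \<in> borel_measurable (history n)"
  using measurable_comp[OF measurable_delay_history, of m n g borel] by (simp add: comp_def)

lemma measurable_noise_history: "v k \<in> borel_measurable (history n)"
proof (rule measurable_historyI)
  fix A :: "real set" assume "A \<in> sets borel"
  then have "(\<lambda>t. t k) -` A \<inter> space real_seqs \<in> sets real_seqs"
    by (rule measurable_sets[OF measurable_component_singleton[OF UNIV_I]])
  moreover have "v k -` A \<inter> space M = {x \<in> space M.
      truncate n (\<lambda>m. real (ts m x)) \<in> space real_seqs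
      \<and> (\<lambda>k. v k x) \<in> (\<lambda>t. t k) -` A \<inter> space real_seqs}"
    by (auto simp: space_PiM truncate_def)
  ultimately show "v k -` A \<inter> space M \<in> history_events n"
    unfolding history_events_def by blast
qed simp

lemma measurable_from_history: "f \<in> measurable (history n) N \<Longrightarrow> f \<in> measurable M N"
  by (rule measurable_from_subalg[OF subalgebra_sigma[OF history_events_subset_events]])

lemma prob_delay_past_delays:
  assumes B: "B \<in> sets real_seqs"
  shows "prob {x \<in> space M. ts n x = j \<and> truncate n (\<lambda>m. real (ts m x)) \<in> B} =
    prob {x \<in> space M. ts n x = j} * prob {x \<in> space M. truncate n (\<lambda>m. real (ts m x)) \<in> B}"
proof -
  let ?Pi = "\<lambda>I. Pi\<^sub>M I (\<lambda>_. count_space UNIV) :: (nat \<Rightarrow> nat) measure"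
    and ?Y = "\<lambda>s. \<lambda>m. if m < n then real (s m) else 0"
  have indep: "indep_var (?Pi {n}) (\<lambda>x. restrict (\<lambda>i. ts i x) {n})
      (?Pi {..<n}) (\<lambda>x. restrict (\<lambda>i. ts i x) {..<n})"
    by (rule indep_var_restrict[OF ts_indep]) auto
  have "?Y \<in> measurable (?Pi {..<n}) real_seqs"
  proof (rule measurable_PiM_single')
    fix m
    show "(\<lambda>s. if m < n then real (s m) else 0) \<in> borel_measurable (?Pi {..<n})"
    proof (cases "m < n")
      case True
      have "(\<lambda>s. s m) \<in> measurable (?Pi {..<n}) (count_space UNIV)"
        by (rule measurable_component_singleton) (simp add: True)
      then show ?thesis
        using True by (simp add: measurable_compose[OF _ measurable_count_space])
    qed simp
  qed simp
  then have past: "?Y -` B \<inter> space (?Pi {..<n}) \<in> sets (?Pi {..<n})"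
    using B by (rule measurable_sets)
  have now: "(\<lambda>s. s n) -` {j} \<inter> space (?Pi {n}) \<in> sets (?Pi {n})"
    by (rule measurable_sets[OF measurable_component_singleton]) simp_all
  have "?Y (restrict (\<lambda>i. ts i x) {..<n}) = truncate n (\<lambda>m. real (ts m x))" for x
    by (simp add: truncate_def fun_eq_iff)
  then show ?thesis
    using prob_conj_indep_var[OF indep now past] by (simp add: space_PiM)
qed

lemma prob_delay_inter_history:
  assumes "H \<in> history_events n"
  shows "prob ({x \<in> space M. ts n x = j} \<inter> H) = prob {x \<in> space M. ts n x = j} * prob H"
proof -
  let ?\<delta> = "\<lambda>x. (\<lambda>m. real (ts m x))" and ?\<nu> = "\<lambda>x. (\<lambda>k. v k x)"
  obtain B C where H: "H = {x \<in> space M. truncate n (?\<delta> x) \<in> B \<and> ?\<nu> x \<in> C}"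
    and B: "B \<in> sets real_seqs" and C: "C \<in> sets real_seqs"
    using assms unfolding history_events_def by blast
  have B_trunc: "truncate n -` B \<inter> space real_seqs \<in> sets real_seqs"
    using measurable_sets[OF measurable_truncate B] .
  have "(\<lambda>t. t n) -` {real j} \<inter> space real_seqs \<in> sets real_seqs"
    by (rule measurable_sets[OF measurable_component_singleton[OF UNIV_I]]) simp
  then have B_j: "((\<lambda>t. t n) -` {real j} \<inter> space real_seqs) \<inter> (truncate n -` B \<inter> space real_seqs)
      \<in> sets real_seqs"
    using B_trunc by blast
  have "prob ({x \<in> space M. ts n x = j} \<inter> H) = prob {x \<in> space M.
      ?\<delta> x \<in> ((\<lambda>t. t n) -` {real j} \<inter> space real_seqs) \<inter> (truncate n -` B \<inter> space real_seqs)
      \<and> ?\<nu> x \<in> C}"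
    unfolding H by (rule arg_cong[where f = prob]) (auto simp: space_PiM)
  also have "\<dots> = prob {x \<in> space M. ts n x = j \<and> truncate n (?\<delta> x) \<in> B}
      * prob {x \<in> space M. ?\<nu> x \<in> C}"
    unfolding prob_conj_indep_var[OF ts_v_indep B_j C]
    by (intro arg_cong[where f = "\<lambda>P. prob P * _"]) (auto simp: space_PiM)
  also have "\<dots> = prob {x \<in> space M. ts n x = j}
      * (prob {x \<in> space M. ?\<delta> x \<in> truncate n -` B \<inter> space real_seqs} * prob {x \<in> space M. ?\<nu> x \<in> C})"
    unfolding prob_delay_past_delays[OF B] by (simp add: space_PiM)
  also have "\<dots> = prob {x \<in> space M. ts n x = j} * prob H"
    unfolding H prob_conj_indep_var[OF ts_v_indep B_trunc C, symmetric] by (simp add: space_PiM)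
  finally show ?thesis .
qed

lemma integral_delay_mult_history:
  assumes "Z \<in> borel_measurable (history n)" "integrable M Z"
  shows "(\<integral>x. g (ts n x) * Z x \<partial>M) = (\<Sum>j\<le>tau. g j * p j) * integral\<^sup>L M Z"
  using integral_fun_mult_indep[OF history_events_subset_events Int_stable_history_events
      measurable_delay ts_range prob_delay_inter_history assms]
  by (simp add: ts_dist)

definition noise_bound :: "nat \<Rightarrow> 'a \<Rightarrow> real" where
  "noise_bound m x = (\<Sum>j<m. \<bar>v j x\<bar>)"

lemma noise_bound_mono: "m \<le> m' \<Longrightarrow> noise_bound m x \<le> noise_bound m' x"
  unfolding noise_bound_def by (rule sum_mono2) auto

lemma integrable_noise_bound_sq: "integrable M (\<lambda>x. (noise_bound m x)\<^sup>2)"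
proof (rule Bochner_Integration.integrable_bound)
  show "integrable M (\<lambda>x. (\<Sum>j<m. (v j x)\<^sup>2) * real m)"
    by (intro integrable_mult_left Bochner_Integration.integrable_sum v_int)
  show "(\<lambda>x. (noise_bound m x)\<^sup>2) \<in> borel_measurable M"
    unfolding noise_bound_def
    using measurable_from_history[OF measurable_noise_history] by measurable
  show "AE x in M. norm ((noise_bound m x)\<^sup>2) \<le> norm ((\<Sum>j<m. (v j x)\<^sup>2) * real m)"
    using sum_squared_le_sum_of_squares[of "\<lambda>j. \<bar>v j _\<bar>" "{..<m}"]
    by (intro AE_I2) (simp add: noise_bound_def sum_nonneg)
qed

definition admissible :: "nat \<Rightarrow> nat \<Rightarrow> ('a \<Rightarrow> 'b::euclidean_space) \<Rightarrow> bool" where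
  "admissible n m f \<longleftrightarrow> f \<in> borel_measurable (history n) \<and> dominated_by (noise_bound m) f"

lemma admissible_zero: "admissible n m (\<lambda>x. 0)"
  by (simp add: admissible_def dominated_by_zero)

lemma admissible_add:
  "admissible n m f \<Longrightarrow> admissible n m g \<Longrightarrow> admissible n m (\<lambda>x. f x + g x)"
  by (simp add: admissible_def dominated_by_add borel_measurable_add)

lemma admissible_diff:
  "admissible n m f \<Longrightarrow> admissible n m g \<Longrightarrow> admissible n m (\<lambda>x. f x - g x)"
  by (simp add: admissible_def dominated_by_diff borel_measurable_diff)

lemma admissible_bounded_linear:
  "bounded_linear L \<Longrightarrow> admissible n m f \<Longrightarrow> admissible n m (\<lambda>x. L (f x))"
  by (simp add: admissible_def dominated_by_bounded_linear
      borel_measurable_continuous_on[OF linear_continuous_on])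

lemma admissible_mult_bounded:
  fixes f :: "'a \<Rightarrow> real"
  assumes "g \<in> borel_measurable (history n)" "\<And>x. \<bar>g x\<bar> \<le> K" "admissible n m f"
  shows "admissible n m (\<lambda>x. g x * f x)"
  using assms dominated_by_mult_bounded[of g K "noise_bound m" f]
  by (simp add: admissible_def borel_measurable_times)

lemma admissible_sum:
  "finite I \<Longrightarrow> (\<And>i. i \<in> I \<Longrightarrow> admissible n m (f i)) \<Longrightarrow> admissible n m (\<lambda>x. \<Sum>i\<in>I. f i x)"
  by (induction I rule: finite_induct) (auto intro: admissible_zero admissible_add)

lemma admissible_mono: "admissible n m f \<Longrightarrow> m \<le> m' \<Longrightarrow> admissible n m' f"
  unfolding admissible_def
  using dominated_by_mono[of "noise_bound m" "noise_bound m'"] noise_bound_mono by blast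

lemma admissible_noise: "k < m \<Longrightarrow> admissible n m (v k)"
  unfolding admissible_def dominated_by_def noise_bound_def
  by (intro conjI measurable_noise_history exI[of _ 1]) (auto intro: member_le_sum)

lemma integrable_mult_admissible:
  fixes f g :: "'a \<Rightarrow> real"
  assumes "admissible n a f" "admissible n' b g"
  shows "integrable M (\<lambda>x. f x * g x)"
proof -
  have "admissible n (max a b) f" "admissible n' (max a b) g"
    using assms by (auto intro: admissible_mono)
  then show ?thesis
    unfolding admissible_def
    by (intro integrable_mult_dominated[OF integrable_noise_bound_sq]) (auto intro: measurable_from_history)
qed

end

lemma sig_ext_diff: "sig_ext f (int k - int i) = (if i \<le> k then f (k - i) else (\<lambda>x. 0))"
  by (auto simp: sig_ext_def fun_eq_iff nat_diff_distrib)

lemma sum_atMost_of_bool_eq_mult: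
  fixes f :: "nat \<Rightarrow> 'a::semiring_1"
  assumes "i \<le> n"
  shows "(\<Sum>j\<le>n. of_bool (j = i) * f j) = f i"
  using assms by (simp add: Int_absorb1)

locale delayed_feedback_loop = random_delays_and_noise M tau p ts v
  for M :: "'a measure" and tau p ts v +
  fixes \<alpha> :: "nat \<Rightarrow> real"
    and u y ud :: "nat \<Rightarrow> 'a \<Rightarrow> real"
    and AP :: "real^'n^'n" and BP CP :: "real^'n" and xP :: "nat \<Rightarrow> 'a \<Rightarrow> real^'n"
    and AK :: "real^'m^'m" and BK CK :: "real^'m" and DK :: real
    and xK :: "nat \<Rightarrow> 'a \<Rightarrow> real^'m"
  assumes xP0: "\<And>x. xP 0 x = 0"
    and xPS: "\<And>k x. xP (Suc k) x = AP *v xP k x + (v k x - ud k x) *\<^sub>R BP"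
    and yP: "\<And>k x. y k x = CP \<bullet> xP k x"
    and xK0: "\<And>x. xK 0 x = 0"
    and xKS: "\<And>k x. xK (Suc k) x = AK *v xK k x + y k x *\<^sub>R BK"
    and uK: "\<And>k x. u k x = CK \<bullet> xK k x + DK * y k x"
    and ud_def: "\<And>k x. ud k x =
        (\<Sum>i\<le>tau. \<alpha> i * kdelta (int (ts (k - i) x) - int i) * sig_ext u (int k - int i) x)"
begin

lemma admissible_output:
  assumes "admissible n k (xP k)" "admissible n k (xK k)"
  shows "admissible n k (u k)"
proof -
  have "u k = (\<lambda>x. CK \<bullet> xK k x + DK * (CP \<bullet> xP k x))"
    by (simp add: fun_eq_iff uK yP)
  moreover have "admissible n k (\<lambda>x. CK \<bullet> xK k x + DK * (CP \<bullet> xP k x))"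
    using assms
    by (intro admissible_add admissible_bounded_linear[where L = "\<lambda>z. CK \<bullet> z"]
        admissible_bounded_linear[where L = "\<lambda>z. DK * (CP \<bullet> z)"])
      (auto intro: bounded_linear_inner_right
        bounded_linear_compose[OF bounded_linear_mult_right bounded_linear_inner_right])
  ultimately show ?thesis
    by simp
qed

lemma admissible_channel_output:
  assumes u: "\<And>k. k \<le> l \<Longrightarrow> admissible n l (u k)" and "l < n"
  shows "admissible n l (ud l)"
proof -
  have "admissible n l (\<lambda>x. (\<alpha> i * kdelta (int (ts (l - i) x) - int i)) * sig_ext u (int l - int i) x)"
    for i
  proof (rule admissible_mult_bounded)
    show "(\<lambda>x. \<alpha> i * kdelta (int (ts (l - i) x) - int i)) \<in> borel_measurable (history n)"
      using \<open>l < n\<close> by (intro measurable_delay_fun_history) simp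
    show "\<bar>\<alpha> i * kdelta (int (ts (l - i) x) - int i)\<bar> \<le> \<bar>\<alpha> i\<bar>" for x
      by (simp add: kdelta_def)
    show "admissible n l (sig_ext u (int l - int i))"
      using u by (simp add: sig_ext_diff admissible_zero)
  qed
  then have "admissible n l (\<lambda>x. \<Sum>i\<le>tau. \<alpha> i * kdelta (int (ts (l - i) x) - int i) * sig_ext u (int l - int i) x)"
    by (intro admissible_sum) simp_all
  then show ?thesis
    by (simp add: ud_def[abs_def])
qed

lemma admissible_state:
  "m \<le> n \<Longrightarrow> admissible n m (xP m) \<and> admissible n m (xK m)"
proof (induction m rule: less_induct)
  case (less m)
  show ?case
  proof (cases m)
    case 0
    have "xP 0 = (\<lambda>x. 0)" "xK 0 = (\<lambda>x. 0)"
      by (simp_all add: fun_eq_iff xP0 xK0)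
    then show ?thesis
      using 0 by (simp add: admissible_zero)
  next
    case (Suc l)
    have u: "admissible n l (u k)" if "k \<le> l" for k
    proof -
      have "admissible n k (xP k) \<and> admissible n k (xK k)"
        using less.IH[of k] less.prems that Suc by simp
      then show ?thesis
        using that by (blast intro: admissible_output admissible_mono)
    qed
    have ud: "admissible n l (ud l)"
      using u less.prems Suc by (intro admissible_channel_output) simp_all
    have y: "admissible n l (y l)"
      using less.IH[of l] less.prems Suc
      by (simp add: yP[abs_def] admissible_bounded_linear bounded_linear_inner_right)
    have "admissible n m (\<lambda>x. AP *v xP l x + (v l x - ud l x) *\<^sub>R BP)"
      using less.IH[of l] less.prems Suc ud
      by (intro admissible_add admissible_bounded_linear[where L = "\<lambda>z. AP *v z"]
          admissible_bounded_linear[where L = "\<lambda>r. r *\<^sub>R BP"] admissible_diff admissible_noise)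
        (auto intro: admissible_mono bounded_linear_scaleR_left)
    moreover have "admissible n m (\<lambda>x. AK *v xK l x + y l x *\<^sub>R BK)"
      using less.IH[of l] less.prems Suc y
      by (intro admissible_add admissible_bounded_linear[where L = "\<lambda>z. AK *v z"]
          admissible_bounded_linear[where L = "\<lambda>r. r *\<^sub>R BK"])
        (auto intro: admissible_mono bounded_linear_scaleR_left)
    ultimately show ?thesis
      using Suc by (simp add: xPS[abs_def] xKS[abs_def])
  qed
qed

lemma admissible_input: "m \<le> n \<Longrightarrow> admissible n m (u m)"
  using admissible_state by (blast intro: admissible_output)

text \<open>\<open>weight i t\<close> is the value of \<open>\<omega>(k, k - i)\<close> on the event \<open>\<tau>\<^sub>k\<^sub>-\<^sub>i = t\<close>.\<close>
definition weight :: "nat \<Rightarrow> nat \<Rightarrow> real" where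
  "weight i t = \<alpha> i * (of_bool (t = i) - p i)"

definition delay_term :: "nat \<Rightarrow> nat \<Rightarrow> 'a \<Rightarrow> real" where
  "delay_term k i x = (if i \<le> k then weight i (ts (k - i) x) * u (k - i) x else 0)"

lemma dsig_eq_sum_delay_term: "dsig tau \<alpha> p ts u k x = (\<Sum>i\<le>tau. delay_term k i x)"
  unfolding dsig_def delay_term_def omega_def weight_def kdelta_def
  by (intro sum.cong) auto

lemma sum_weight_prob:
  assumes "i \<le> tau"
  shows "(\<Sum>j\<le>tau. weight i j * p j) = 0"
proof -
  have "(\<Sum>j\<le>tau. weight i j * p j) = (\<Sum>j\<le>tau. \<alpha> i * (of_bool (j = i) * p j) - \<alpha> i * p i * p j)"
    by (rule sum.cong) (simp_all add: weight_def algebra_simps)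
  also have "\<dots> = \<alpha> i * (\<Sum>j\<le>tau. of_bool (j = i) * p j) - \<alpha> i * p i * (\<Sum>j\<le>tau. p j)"
    by (simp only: sum_subtractf sum_distrib_left)
  also have "\<dots> = 0"
    by (simp only: p_sum sum_atMost_of_bool_eq_mult[OF assms])
  finally show ?thesis .
qed

lemma sum_weight_mult_prob:
  assumes "i1 \<le> tau" "i2 \<le> tau"
  shows "(\<Sum>j\<le>tau. weight i1 j * weight i2 j * p j) =
    \<alpha> i1 * \<alpha> i2 * (of_bool (i1 = i2) * p i1 - p i1 * p i2)"
proof -
  have "(\<Sum>j\<le>tau. weight i1 j * weight i2 j * p j) = (\<Sum>j\<le>tau.
      \<alpha> i1 * \<alpha> i2 * (of_bool (j = i1) * (of_bool (i1 = i2) * p j - p i2 * p j))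
      - \<alpha> i1 * \<alpha> i2 * (of_bool (j = i2) * (p i1 * p j)) + \<alpha> i1 * \<alpha> i2 * (p i1 * p i2) * p j)"
    by (rule sum.cong) (auto simp: weight_def algebra_simps)
  also have "\<dots> = \<alpha> i1 * \<alpha> i2 * (\<Sum>j\<le>tau. of_bool (j = i1) * (of_bool (i1 = i2) * p j - p i2 * p j))
      - \<alpha> i1 * \<alpha> i2 * (\<Sum>j\<le>tau. of_bool (j = i2) * (p i1 * p j))
      + \<alpha> i1 * \<alpha> i2 * (p i1 * p i2) * (\<Sum>j\<le>tau. p j)"
    by (simp only: sum.distrib sum_subtractf sum_distrib_left)
  also have "\<dots> = \<alpha> i1 * \<alpha> i2 * (of_bool (i1 = i2) * p i1 - p i1 * p i2)"
    by (simp only: p_sum sum_atMost_of_bool_eq_mult[OF assms(1)] sum_atMost_of_bool_eq_mult[OF assms(2)])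
      (simp add: algebra_simps)
  finally show ?thesis .
qed

lemma admissible_delay_term: "k - i < n \<Longrightarrow> admissible n (k - i) (delay_term k i)"
proof (cases "i \<le> k")
  case True
  assume "k - i < n"
  have "admissible n (k - i) (\<lambda>x. weight i (ts (k - i) x) * u (k - i) x)"
  proof (rule admissible_mult_bounded)
    show "(\<lambda>x. weight i (ts (k - i) x)) \<in> borel_measurable (history n)"
      using \<open>k - i < n\<close> by (rule measurable_delay_fun_history)
    show "\<bar>weight i (ts (k - i) x)\<bar> \<le> \<bar>\<alpha> i\<bar> * (1 + \<bar>p i\<bar>)" for x
      unfolding weight_def abs_mult by (intro mult_left_mono) auto
    show "admissible n (k - i) (u (k - i))"
      using \<open>k - i < n\<close> by (intro admissible_input) simp
  qed
  then show ?thesis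
    using True by (simp add: delay_term_def[abs_def])
qed (simp add: delay_term_def[abs_def] admissible_zero)

lemma integrable_delay_term_mult: "integrable M (\<lambda>x. delay_term k1 i1 x * delay_term k2 i2 x)"
  using admissible_delay_term[of k1 i1 "Suc (k1 - i1)"] admissible_delay_term[of k2 i2 "Suc (k2 - i2)"]
  by (intro integrable_mult_admissible) auto

lemma integral_delay_term_mult_earlier:
  assumes "i1 \<le> tau" "i1 \<le> k1" "k2 - i2 < k1 - i1"
  shows "(\<integral>x. delay_term k1 i1 x * delay_term k2 i2 x \<partial>M) = 0"
proof -
  let ?a = "k1 - i1"
  have u: "admissible ?a ?a (u ?a)"
    by (rule admissible_input) simp
  have d: "admissible ?a (k2 - i2) (delay_term k2 i2)"
    using assms(3) by (rule admissible_delay_term)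
  have "(\<integral>x. delay_term k1 i1 x * delay_term k2 i2 x \<partial>M) =
      (\<integral>x. weight i1 (ts ?a x) * (u ?a x * delay_term k2 i2 x) \<partial>M)"
    using assms(2) by (simp add: delay_term_def[of k1] mult.assoc)
  also have "\<dots> = (\<Sum>j\<le>tau. weight i1 j * p j) * (\<integral>x. u ?a x * delay_term k2 i2 x \<partial>M)"
    using u d
    by (intro integral_delay_mult_history borel_measurable_times integrable_mult_admissible)
      (auto simp: admissible_def)
  also have "\<dots> = 0"
    using assms(1) by (simp add: sum_weight_prob)
  finally show ?thesis .
qed

lemma integral_delay_term_mult_same:
  assumes "i1 \<le> tau" "i2 \<le> tau" "i1 \<le> k1" "i2 \<le> k2" "k1 - i1 = k2 - i2"
  shows "(\<integral>x. delay_term k1 i1 x * delay_term k2 i2 x \<partial>M) =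
    \<alpha> i1 * \<alpha> i2 * (of_bool (i1 = i2) * p i1 - p i1 * p i2) * (\<integral>x. (u (k1 - i1) x)\<^sup>2 \<partial>M)"
proof -
  let ?a = "k1 - i1"
  have u: "admissible ?a ?a (u ?a)"
    by (rule admissible_input) simp
  have "(\<integral>x. delay_term k1 i1 x * delay_term k2 i2 x \<partial>M) =
      (\<integral>x. (weight i1 (ts ?a x) * weight i2 (ts ?a x)) * (u ?a x)\<^sup>2 \<partial>M)"
    using assms(3-5) by (simp add: delay_term_def power2_eq_square ac_simps)
  also have "\<dots> = (\<Sum>j\<le>tau. weight i1 j * weight i2 j * p j) * (\<integral>x. (u ?a x)\<^sup>2 \<partial>M)"
    using u integrable_mult_admissible[OF u u]
    by (intro integral_delay_mult_history) (auto simp: admissible_def power2_eq_square)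
  finally show ?thesis
    using assms(1,2) by (simp add: sum_weight_mult_prob)
qed

lemma integral_delay_term_mult:
  assumes "i1 \<le> tau" "i2 \<le> tau"
  shows "(\<integral>x. delay_term k1 i1 x * delay_term k2 i2 x \<partial>M) =
    kdelta (int k1 - int i1 - int k2 + int i2) * (\<alpha> i1 * \<alpha> i2 * (of_bool (i1 = i2) * p i1 - p i1 * p i2))
      * (\<integral>x. (sig_ext u (int k1 - int i1) x)\<^sup>2 \<partial>M)"
proof (cases "i1 \<le> k1 \<and> i2 \<le> k2")
  case False
  then show ?thesis
    by (auto simp: delay_term_def sig_ext_diff kdelta_def)
next
  case True
  then have lag: "int k1 - int i1 - int k2 + int i2 = int (k1 - i1) - int (k2 - i2)"
    by (simp add: of_nat_diff)
  consider "k1 - i1 = k2 - i2" | "k2 - i2 < k1 - i1" | "k1 - i1 < k2 - i2"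
    by linarith
  then show ?thesis
  proof cases
    case 1
    then show ?thesis
      using True integral_delay_term_mult_same[OF assms] by (simp add: lag sig_ext_diff kdelta_def)
  next
    case 2
    then have "int k1 - int i1 - int k2 + int i2 \<noteq> 0"
      unfolding lag by linarith
    then show ?thesis
      using 2 True integral_delay_term_mult_earlier[OF assms(1)] by (simp add: kdelta_def)
  next
    case 3
    then have "int k1 - int i1 - int k2 + int i2 \<noteq> 0"
      unfolding lag by linarith
    then show ?thesis
      using 3 True integral_delay_term_mult_earlier[OF assms(2), of k2 k1 i1]
      by (simp add: kdelta_def mult.commute)
  qed
qed

lemma integral_dsig_mult:
  "(\<integral>x. dsig tau \<alpha> p ts u k1 x * dsig tau \<alpha> p ts u k2 x \<partial>M) =
    (\<Sum>i1\<le>tau. \<Sum>i2\<le>tau. kdelta (int k1 - int i1 - int k2 + int i2)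
      * (\<alpha> i1 * \<alpha> i2 * (of_bool (i1 = i2) * p i1 - p i1 * p i2))
      * (\<integral>x. (sig_ext u (int k1 - int i1) x)\<^sup>2 \<partial>M))"
proof -
  have "(\<integral>x. dsig tau \<alpha> p ts u k1 x * dsig tau \<alpha> p ts u k2 x \<partial>M) =
      (\<integral>x. (\<Sum>i1\<le>tau. \<Sum>i2\<le>tau. delay_term k1 i1 x * delay_term k2 i2 x) \<partial>M)"
    by (simp add: dsig_eq_sum_delay_term sum_product)
  also have "\<dots> = (\<Sum>i1\<le>tau. \<Sum>i2\<le>tau. (\<integral>x. delay_term k1 i1 x * delay_term k2 i2 x \<partial>M))"
    by (simp add: integrable_delay_term_mult Bochner_Integration.integrable_sum)
  finally show ?thesis
    by (simp add: integral_delay_term_mult)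
qed

lemma integral_dsig_sq:
  "(\<integral>x. (dsig tau \<alpha> p ts u k x)\<^sup>2 \<partial>M) =
    (\<Sum>i\<le>tau. (\<alpha> i)\<^sup>2 * p i * (1 - p i) * (\<integral>x. (sig_ext u (int k - int i) x)\<^sup>2 \<partial>M))"
proof -
  have "(\<integral>x. (dsig tau \<alpha> p ts u k x)\<^sup>2 \<partial>M) = (\<integral>x. dsig tau \<alpha> p ts u k x * dsig tau \<alpha> p ts u k x \<partial>M)"
    by (simp add: power2_eq_square)
  also have "\<dots> = (\<Sum>i\<le>tau. \<alpha> i * \<alpha> i * (p i - p i * p i) * (\<integral>x. (sig_ext u (int k - int i) x)\<^sup>2 \<partial>M))"
    unfolding integral_dsig_mult
  proof (rule sum.cong[OF refl])
    fix i1 assume "i1 \<in> {..tau}"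
    have "kdelta (int k - int i1 - int k + int i2) = of_bool (i2 = i1)" for i2
      by (simp add: kdelta_def)
    then show "(\<Sum>i2\<le>tau. kdelta (int k - int i1 - int k + int i2)
        * (\<alpha> i1 * \<alpha> i2 * (of_bool (i1 = i2) * p i1 - p i1 * p i2))
        * (\<integral>x. (sig_ext u (int k - int i1) x)\<^sup>2 \<partial>M)) =
      \<alpha> i1 * \<alpha> i1 * (p i1 - p i1 * p i1) * (\<integral>x. (sig_ext u (int k - int i1) x)\<^sup>2 \<partial>M)"
      using \<open>i1 \<in> {..tau}\<close> by (simp add: mult.assoc sum_atMost_of_bool_eq_mult)
  qed
  finally show ?thesis
    by (simp add: power2_eq_square algebra_simps)
qed

lemma integral_dsig_mult_neq:
  assumes "k1 \<noteq> k2"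
  shows "(\<integral>x. dsig tau \<alpha> p ts u k1 x * dsig tau \<alpha> p ts u k2 x \<partial>M) =
    - (\<Sum>i1\<le>tau. \<Sum>i2\<le>tau. kdelta (int k1 - int i1 - int k2 + int i2) * \<alpha> i1 * \<alpha> i2 * p i1 * p i2
        * (\<integral>x. (sig_ext u (int k1 - int i1) x)\<^sup>2 \<partial>M))"
proof -
  have "kdelta (int k1 - int i1 - int k2 + int i2) * (\<alpha> i1 * \<alpha> i2 * (of_bool (i1 = i2) * p i1 - p i1 * p i2))
      = - (kdelta (int k1 - int i1 - int k2 + int i2) * \<alpha> i1 * \<alpha> i2 * p i1 * p i2)" for i1 i2
    using assms by (auto simp: kdelta_def)
  then show ?thesis
    by (simp add: integral_dsig_mult sum_negf)
qed

lemma integral_dsig_mult_far: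
  assumes "\<bar>int k1 - int k2\<bar> > int tau"
  shows "(\<integral>x. dsig tau \<alpha> p ts u k1 x * dsig tau \<alpha> p ts u k2 x \<partial>M) = 0"
proof -
  have "kdelta (int k1 - int i1 - int k2 + int i2) = 0" if "i1 \<le> tau" "i2 \<le> tau" for i1 i2
    using assms that by (simp add: kdelta_def)
  moreover have "k1 \<noteq> k2"
    using assms by auto
  ultimately show ?thesis
    by (simp add: integral_dsig_mult_neq)
qed

end

theorem lemma5:
  fixes M :: "'a measure"
    and tau :: nat
    and \<alpha> p :: "nat \<Rightarrow> real"
    and ts :: "nat \<Rightarrow> 'a \<Rightarrow> nat"
    and v u y ud :: "nat \<Rightarrow> 'a \<Rightarrow> real"
    and AP :: "real^'n^'n" and BP CP :: "real^'n" and xP :: "nat \<Rightarrow> 'a \<Rightarrow> real^'n"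
    and AK :: "real^'m^'m" and BK CK :: "real^'m" and DK :: real
    and xK :: "nat \<Rightarrow> 'a \<Rightarrow> real^'m"
  assumes M: "prob_space M"
    (* i.i.d. delay sequence with values in {0..tau}, Pr{tau_n = i} = p_i *)
    and ts_range: "\<And>n x. x \<in> space M \<Longrightarrow> ts n x \<le> tau"
    and ts_indep: "prob_space.indep_vars M (\<lambda>_. count_space UNIV) ts UNIV"
    and ts_dist: "\<And>n i. i \<le> tau \<Longrightarrow> measure M {x \<in> space M. ts n x = i} = p i"
    and p_sum: "(\<Sum>i\<le>tau. p i) = 1"
    (* v: zero-mean white noise (independent values) with bounded variances *)
    and v_indep: "prob_space.indep_vars M (\<lambda>_. borel) v UNIV"
    and v_int: "\<And>k. integrable M (\<lambda>x. (v k x)\<^sup>2)"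
    and v_mean: "\<And>k. integral\<^sup>L M (v k) = 0"
    and v_bdd: "\<exists>B. \<forall>k. prob_space.variance M (v k) \<le> B"
    (* {tau_n} independent of {v(k)} *)
    and ts_v_indep: "prob_space.indep_var M
        (Pi\<^sub>M UNIV (\<lambda>_. borel)) (\<lambda>x. (\<lambda>n. real (ts n x)) :: nat \<Rightarrow> real)
        (Pi\<^sub>M UNIV (\<lambda>_. borel)) (\<lambda>x. (\<lambda>k. v k x) :: nat \<Rightarrow> real)"
    (* strictly proper plant P (state space, zero feedthrough), at rest at k = 0,
       plant input v - u_d, plant output y *)
    and xP0: "\<And>x. xP 0 x = 0"
    and xPS: "\<And>k x. xP (Suc k) x = AP *v xP k x + (v k x - ud k x) *\<^sub>R BP"
    and yP: "\<And>k x. y k x = CP \<bullet> xP k x"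
    (* proper controller K, u = K y, at rest at k = 0 *)
    and xK0: "\<And>x. xK 0 x = 0"
    and xKS: "\<And>k x. xK (Suc k) x = AK *v xK k x + y k x *\<^sub>R BK"
    and uK: "\<And>k x. u k x = CK \<bullet> xK k x + DK * y k x"
    (* channel *)
    and ud_def: "\<And>k x. ud k x =
        (\<Sum>i\<le>tau. \<alpha> i * kdelta (int (ts (k - i) x) - int i) * sig_ext u (int k - int i) x)"
  shows
    "(\<forall>k. integral\<^sup>L M (\<lambda>x. (dsig tau \<alpha> p ts u k x)\<^sup>2) =
          (\<Sum>i\<le>tau. (\<alpha> i)\<^sup>2 * p i * (1 - p i) *
              integral\<^sup>L M (\<lambda>x. (sig_ext u (int k - int i) x)\<^sup>2)))
     \<and> (\<forall>k1 k2. 1 \<le> \<bar>int k1 - int k2\<bar> \<and> \<bar>int k1 - int k2\<bar> \<le> int tau \<longrightarrow>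
          integral\<^sup>L M (\<lambda>x. dsig tau \<alpha> p ts u k1 x * dsig tau \<alpha> p ts u k2 x) =
          - (\<Sum>i1\<le>tau. \<Sum>i2\<le>tau.
               kdelta (int k1 - int i1 - int k2 + int i2) * \<alpha> i1 * \<alpha> i2 * p i1 * p i2 *
               integral\<^sup>L M (\<lambda>x. (sig_ext u (int k1 - int i1) x)\<^sup>2)))
     \<and> (\<forall>k1 k2. \<bar>int k1 - int k2\<bar> > int tau \<longrightarrow>
          integral\<^sup>L M (\<lambda>x. dsig tau \<alpha> p ts u k1 x * dsig tau \<alpha> p ts u k2 x) = 0)"
proof -
  interpret delayed_feedback_loop M tau p ts v \<alpha> u y ud AP BP CP xP AK BK CK DK xK
    by (intro delayed_feedback_loop.intro random_delays_and_noise.intro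
        random_delays_and_noise_axioms.intro delayed_feedback_loop_axioms.intro M)
      (use assms in auto)
  show ?thesis
    using integral_dsig_sq integral_dsig_mult_neq integral_dsig_mult_far by fastforce
qed

end
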